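(* Assume $X_0\in L^\infty$, $\beta\in\mathbb{R}$, $\lambda>0$. Let $w\in\mathscr{W}^{\mathrm{icx}}$. If $w(1)=w(1-)$ and the right derivative $w'$ does not belong to $L^2([0,1))$, then $\inf_{Q\in\mathscr{Q}}L(Q,w;\beta,\lambda)=-\infty$.
   Context: $(\Omega,\mathcal{F},\mathbb{P})$ is a complete nonatomic probability space. $\rho\in L^2$ with $\mathbb{P}(\rho>0)=1$ and $\mathrm{Var}[\rho]>0$. For a random variable $X$, $Q_X(t)=\inf\{y:\mathbb{P}(X\le y)>t\}$ for $t\in[0,1)$, $Q_X(1):=\lim_{t\uparrow1}Q_X(t)$; $Q_0:=Q_{X_0}$. $\mathscr{Q}$ is the set of increasing, right-continuous $Q:[0,1)\to\mathbb{R}$ with $\int_0^1Q^2<\infty$ (extended by $Q(1)=Q(1-)$). $\mathscr{W}^{\mathrm{icx}}$ is the set of increasing convex $w:[0,1]\to[0,\infty)$ with $w(0)=0$; each $w$ is identified with the finite Borel measure on $[0,1]$ with distribution function $w$ (with $w(0-):=0$). Define $$L(Q,w;\beta,\lambda)=\int_0^1(Q(s)-\beta)^2ds+\lambda\int_0^1Q(s)Q_\rho(1-s)ds-\Big(\int_{[0,1]}Q(s)dw(s)-\int_{[0,1]}Q_0(s)dw(s)\Big).$$ *)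

theory Defs
  imports "HOL-Probability.Probability"
begin

definition nonatomic :: "'a measure \<Rightarrow> bool" where
  "nonatomic M \<longleftrightarrow> (\<forall>A\<in>sets M. measure M A > 0 \<longrightarrow>
      (\<exists>B\<in>sets M. B \<subseteq> A \<and> 0 < measure M B \<and> measure M B < measure M A))"

definition quantile0 :: "'a measure \<Rightarrow> ('a \<Rightarrow> real) \<Rightarrow> real \<Rightarrow> real" where
  "quantile0 M X t = Inf {y. measure M {x \<in> space M. X x \<le> y} > t}"

definition quantile :: "'a measure \<Rightarrow> ('a \<Rightarrow> real) \<Rightarrow> real \<Rightarrow> real" where
  "quantile M X t = (if t < 1 then quantile0 M X t else Lim (at_left 1) (quantile0 M X))"

definition Qset :: "(real \<Rightarrow> real) set" where
  "Qset = {Q. mono_on {0..<1} Q \<and> (\<forall>t\<in>{0..<1}. continuous (at_right t) Q)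
              \<and> set_integrable lborel {0..<1} (\<lambda>s. (Q s)\<^sup>2)
              \<and> Q 1 = Lim (at_left 1) Q}"

definition Wicx :: "(real \<Rightarrow> real) set" where
  "Wicx = {w. mono_on {0..1} w \<and> convex_on {0..1} w \<and> w 0 = 0 \<and> (\<forall>s\<in>{0..1}. 0 \<le> w s)}"

definition wmeasure :: "(real \<Rightarrow> real) \<Rightarrow> real measure" where
  "wmeasure w = interval_measure (\<lambda>x. if x < 0 then 0 else if x \<le> 1 then w x else w 1)"

definition rderiv :: "(real \<Rightarrow> real) \<Rightarrow> real \<Rightarrow> real" where
  "rderiv w s = Lim (at_right 0) (\<lambda>h. (w (s + h) - w s) / h)"

definition Lfun :: "'a measure \<Rightarrow> ('a \<Rightarrow> real) \<Rightarrow> ('a \<Rightarrow> real) \<Rightarrow> (real \<Rightarrow> real)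
    \<Rightarrow> (real \<Rightarrow> real) \<Rightarrow> real \<Rightarrow> real \<Rightarrow> real" where
  "Lfun M \<rho> X0 Q w beta lam =
     (LINT s:{0..1}|lborel. (Q s - beta)\<^sup>2)
     + lam * (LINT s:{0..1}|lborel. Q s * quantile M \<rho> (1 - s))
     - ((LINT s:{0..1}|wmeasure w. Q s) - (LINT s:{0..1}|wmeasure w. quantile M X0 s))"

end

(*
  Let h = 1/(2n), x_i = 1/2 + i h, and let g_i be the slope of the chord of w over
  [x_i, x_(i+1)].  The step function Q equal to g_i/2 on [x_i, x_(i+1)) and to 0 below 1/2 is
  admissible.  Since dw gives mass g_i h to (x_i, x_(i+1)], the gain int Q dw is at least
  sum (g_i/2) g_i h, while the quadratic term is at most beta^2/2 + sum (g_i/2 - beta)^2 h and the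
  rho-term is at most lambda K int Q, where K bounds Q_rho on [0, 1/2].  Completing the
  square gives L(Q) <= C - S_n/8 with S_n = sum g_i^2 h and C independent of n.
  By convexity w' is bounded on each cell by the chord slope of the next cell, so a bound on S_n
  would bound int_0^(1-h) w'^2 uniformly in n; since w' is not square integrable, S_n is unbounded.
*)
theory Submission
  imports Defs
begin

section \<open>Chord slopes and right derivatives of convex functions\<close>

definition chord_slope :: "(real \<Rightarrow> real) \<Rightarrow> real \<Rightarrow> real \<Rightarrow> real" where
  "chord_slope f p q = (f q - f p) / (q - p)"

lemma chord_slope_swap: "chord_slope f p q = (f p - f q) / (p - q)"
  by (metis chord_slope_def minus_diff_eq minus_divide_divide)

lemma chord_slope_mono:
  assumes f: "convex_on I f" and I: "p \<in> I" "q \<in> I" "p' \<in> I" "q' \<in> I"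
    and le: "p < q" "p' < q'" "p \<le> p'" "q \<le> q'"
  shows "chord_slope f p q \<le> chord_slope f p' q'"
proof -
  have "chord_slope f p q \<le> chord_slope f p q'"
  proof (cases "q = q'")
    case False
    then show ?thesis
      using convex_on_slope_le(1)[OF f I(1,4), of q] le unfolding chord_slope_swap by simp
  qed simp
  also have "\<dots> \<le> chord_slope f p' q'"
  proof (cases "p = p'")
    case False
    then show ?thesis
      using convex_on_slope_le(2)[OF f I(1,4), of p'] le unfolding chord_slope_swap by simp
  qed simp
  finally show ?thesis .
qed

context
  fixes a b :: real and w :: "real \<Rightarrow> real"
  assumes conv: "convex_on {a..b} w" and mono: "mono_on {a..b} w"
begin

lemma rderiv_eq_Inf_chord_slope:
  assumes s: "a \<le> s" "s < b"
  shows "rderiv w s = Inf ((\<lambda>h. chord_slope w s (s + h)) ` {0<..b - s})"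
proof -
  let ?f = "\<lambda>h. chord_slope w s (s + h)"
  have "(?f \<longlongrightarrow> Inf (?f ` ({0<..} \<inter> {..b - s}))) (at 0 within ({0<..} \<inter> {..b - s}))"
  proof (rule Lim_right_bound)
    show "?f h \<le> ?f h'" if "h \<in> {..b - s}" "h' \<in> {..b - s}" "0 < h" "h \<le> h'" for h h'
      using that s by (intro chord_slope_mono[OF conv]) auto
    show "0 \<le> ?f h" if "h \<in> {..b - s}" "0 < h" for h
      using that s mono_onD[OF mono, of s "s + h"] by (simp add: chord_slope_def)
  qed
  moreover have "at 0 within ({0<..} \<inter> {..b - s}) = at_right (0::real)"
    by (rule at_within_nhd[where S="{..<b - s}"]) (use s in auto)
  moreover have "{0<..} \<inter> {..b - s} = {0<..b - s}" by auto
  ultimately have "(?f \<longlongrightarrow> Inf (?f ` {0<..b - s})) (at_right 0)" by simp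
  then show ?thesis
    unfolding rderiv_def chord_slope_def by (intro tendsto_Lim) auto
qed

lemma chord_slope_nonneg: "a \<le> p \<Longrightarrow> p < q \<Longrightarrow> q \<le> b \<Longrightarrow> 0 \<le> chord_slope w p q"
  using mono_onD[OF mono, of p q] by (simp add: chord_slope_def)

lemma rderiv_nonneg:
  assumes "a \<le> s" "s < b"
  shows "0 \<le> rderiv w s"
  unfolding rderiv_eq_Inf_chord_slope[OF assms]
  by (rule cInf_greatest) (use assms chord_slope_nonneg in auto)

lemma rderiv_le_chord_slope:
  assumes "a \<le> s" "s \<le> p" "p < q" "q \<le> b"
  shows "rderiv w s \<le> chord_slope w p q"
proof -
  have "rderiv w s \<le> chord_slope w s (s + (q - s))"
    using assms by (subst rderiv_eq_Inf_chord_slope)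
      (auto intro!: cInf_lower bdd_belowI[of _ 0] chord_slope_nonneg image_eqI[of _ _ "q - s"])
  also have "\<dots> \<le> chord_slope w p q"
    using assms by (intro chord_slope_mono[OF conv]) auto
  finally show ?thesis .
qed

lemma chord_slope_le_rderiv:
  assumes "a \<le> p" "p < s" "s < b"
  shows "chord_slope w p s \<le> rderiv w s"
  using assms by (subst rderiv_eq_Inf_chord_slope)
    (auto intro!: cInf_greatest chord_slope_mono[OF conv])

lemma rderiv_mono_on: "mono_on {a..<b} (rderiv w)"
proof (rule mono_onI)
  fix s t assume st: "s \<in> {a..<b}" "t \<in> {a..<b}" "s \<le> t"
  show "rderiv w s \<le> rderiv w t"
  proof (cases "s = t")
    case False
    then show ?thesis
      using rderiv_le_chord_slope[of s s t] chord_slope_le_rderiv[of s t] st by fastforce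
  qed simp
qed

lemma continuous_at_right_convex_mono:
  assumes x: "a \<le> x" "x < b"
  shows "(w \<longlongrightarrow> w x) (at_right x)"
proof (rule tendsto_sandwich)
  have near: "eventually (\<lambda>y. y \<in> {x<..<b}) (at_right x)"
    using x by (intro eventually_at_right_real) auto
  show "eventually (\<lambda>y. w x \<le> w y) (at_right x)"
    using near by eventually_elim (use x in \<open>auto intro!: mono_onD[OF mono]\<close>)
  show "eventually (\<lambda>y. w y \<le> w x + (y - x) * chord_slope w x b) (at_right x)"
    using near
  proof eventually_elim
    case (elim y)
    then have "chord_slope w x y \<le> chord_slope w x b"
      using x by (intro chord_slope_mono[OF conv]) auto
    then show ?case using elim by (simp add: chord_slope_def field_simps)
  qed
  have "((\<lambda>y. w x + (y - x) * chord_slope w x b) \<longlongrightarrow> w x + (x - x) * chord_slope w x b) (at_right x)"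
    by (intro tendsto_intros)
  then show "((\<lambda>y. w x + (y - x) * chord_slope w x b) \<longlongrightarrow> w x) (at_right x)" by simp
qed simp

end

section \<open>Step functions on a uniform grid of [1/2, 1]\<close>

lemma integrable_mult_indicator_Ico:
  fixes a b c :: real
  shows "integrable lborel (\<lambda>x. c * indicator {a..<b} x)"
  using emeasure_bounded_finite[of "{a..<b}"]
  by (intro integrable_mult_right integrable_real_indicator) auto

lemma sum_mult_indicator_eq_single:
  fixes c :: "'i \<Rightarrow> real"
  assumes "finite A" "i \<in> A" "x \<in> S i" "\<And>j. j \<in> A \<Longrightarrow> x \<in> S j \<Longrightarrow> j = i"
  shows "(\<Sum>j\<in>A. c j * indicator (S j) x) = c i"
proof -
  have "c j * indicator (S j) x = (if j = i then c i else 0)" if "j \<in> A" for j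
  proof (cases "j = i")
    case False
    then have "x \<notin> S j" using assms(4)[OF that] by blast
    then show ?thesis using False by simp
  qed (use assms(3) in simp)
  then have "(\<Sum>j\<in>A. c j * indicator (S j) x) = (\<Sum>j\<in>A. if j = i then c i else 0)"
    by (rule sum.cong[OF refl])
  then show ?thesis using assms(1,2) by simp
qed

definition grid :: "nat \<Rightarrow> nat \<Rightarrow> real" where
  "grid n i = 1/2 + real i / (2 * real n)"

definition grid_step :: "real \<Rightarrow> (nat \<Rightarrow> real) \<Rightarrow> nat \<Rightarrow> real \<Rightarrow> real" where
  "grid_step c0 c n s =
     c0 * indicator {0..<1/2} s + (\<Sum>i<n. c i * indicator {grid n i..<grid n (Suc i)} s)"

lemma grid_Suc: "grid n (Suc i) = grid n i + 1 / (2 * real n)"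
  by (simp add: grid_def add_divide_distrib)

lemma grid_mono: "i \<le> j \<Longrightarrow> grid n i \<le> grid n j"
  by (simp add: grid_def divide_right_mono)

lemma grid_strict_mono: "n \<ge> 1 \<Longrightarrow> i < j \<Longrightarrow> grid n i < grid n j"
  by (simp add: grid_def divide_strict_right_mono)

lemma half_le_grid: "1/2 \<le> grid n i"
  using grid_mono[of 0 i n] by (simp add: grid_def)

lemma grid_nonneg: "0 \<le> grid n i"
  using half_le_grid[of n i] by simp

lemma grid_le_one: "n \<ge> 1 \<Longrightarrow> i \<le> n \<Longrightarrow> grid n i \<le> 1"
  using grid_mono[of i n n] by (simp add: grid_def)

lemma grid_index_le: "grid n i < grid n (Suc j) \<Longrightarrow> i \<le> j"
  using grid_mono[of "Suc j" i n] by (cases "i \<le> j") auto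

lemma grid_cell_unique:
  assumes "s \<in> {grid n i..<grid n (Suc i)}" "s \<in> {grid n j..<grid n (Suc j)}"
  shows "i = j"
proof -
  have "i \<le> j" using assms by (intro grid_index_le[of n]) auto
  moreover have "j \<le> i" using assms by (intro grid_index_le[of n]) auto
  ultimately show ?thesis by simp
qed

lemma grid_cell_exists:
  assumes n: "n \<ge> 1" and s: "1/2 \<le> s" "s < 1"
  obtains i where "i < n" "s \<in> {grid n i..<grid n (Suc i)}"
proof
  define u where "u = (s - 1/2) * (2 * real n)"
  have u: "0 \<le> u" "u < real n" "s = 1/2 + u / (2 * real n)"
    using s n by (auto simp: u_def)
  have fl: "real (nat \<lfloor>u\<rfloor>) \<le> u" "u < real (Suc (nat \<lfloor>u\<rfloor>))"
    using u(1) by linarith+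
  show "nat \<lfloor>u\<rfloor> < n" using u by linarith
  have "real (nat \<lfloor>u\<rfloor>) / (2 * real n) \<le> u / (2 * real n)"
    using fl by (intro divide_right_mono) auto
  moreover have "u / (2 * real n) < real (Suc (nat \<lfloor>u\<rfloor>)) / (2 * real n)"
    using fl n by (intro divide_strict_right_mono) auto
  ultimately show "s \<in> {grid n (nat \<lfloor>u\<rfloor>)..<grid n (Suc (nat \<lfloor>u\<rfloor>))}"
    unfolding u(3) grid_def by simp
qed

context
  fixes n :: nat assumes n: "n \<ge> 1"
begin

lemma grid_step_cell:
  assumes "i < n" "s \<in> {grid n i..<grid n (Suc i)}"
  shows "grid_step c0 c n s = c i"
proof -
  have "(\<Sum>j<n. c j * indicator {grid n j..<grid n (Suc j)} s) = c i"
    using assms grid_cell_unique by (intro sum_mult_indicator_eq_single) auto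
  then show ?thesis using half_le_grid[of n i] assms by (simp add: grid_step_def)
qed

lemma grid_step_low:
  assumes "0 \<le> s" "s < 1/2"
  shows "grid_step c0 c n s = c0"
proof -
  have "s \<notin> {grid n i..<grid n (Suc i)}" for i
    using half_le_grid[of n i] assms by auto
  then show ?thesis using assms by (simp add: grid_step_def)
qed

lemma grid_step_outside:
  assumes "s \<notin> {0..<1}"
  shows "grid_step c0 c n s = 0"
proof -
  have "s \<notin> {grid n i..<grid n (Suc i)}" if "i < n" for i
    using half_le_grid[of n i] grid_le_one[OF n, of "Suc i"] that assms by auto
  moreover have "s \<notin> {0..<1/2}" using assms by auto
  ultimately show ?thesis by (simp add: grid_step_def)
qed

lemma grid_step_nonneg: "0 \<le> c0 \<Longrightarrow> (\<And>i. i < n \<Longrightarrow> 0 \<le> c i) \<Longrightarrow> 0 \<le> grid_step c0 c n s"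
  unfolding grid_step_def by (intro add_nonneg_nonneg sum_nonneg) auto

lemma integrable_grid_step: "integrable lborel (grid_step c0 c n)"
  unfolding grid_step_def[abs_def]
  by (intro Bochner_Integration.integrable_add Bochner_Integration.integrable_sum
      integrable_mult_indicator_Ico)

lemma integral_grid_step:
  "integral\<^sup>L lborel (grid_step c0 c n) = c0 / 2 + (\<Sum>i<n. c i) / (2 * real n)"
proof -
  note int_Ico = integrable_mult_indicator_Ico
  have "integral\<^sup>L lborel (grid_step c0 c n) = c0 * measure lborel {0..<1/2::real}
      + (\<Sum>i<n. c i * measure lborel {grid n i..<grid n (Suc i)})"
    unfolding grid_step_def[abs_def]
    by (simp only: Bochner_Integration.integral_add[OF int_Ico Bochner_Integration.integrable_sum[OF int_Ico]]
        Bochner_Integration.integral_sum[OF int_Ico] integral_mult_right_zero integral_indicator)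
      simp
  also have "\<dots> = c0 / 2 + (\<Sum>i<n. c i) / (2 * real n)"
    using grid_mono[of i "Suc i" n for i] by (simp add: grid_Suc sum_divide_distrib)
  finally show ?thesis .
qed

lemma le_grid_step:
  assumes low: "\<And>s. 0 \<le> s \<Longrightarrow> s < 1/2 \<Longrightarrow> F s \<le> c0"
    and cell: "\<And>i s. i < n \<Longrightarrow> s \<in> {grid n i..<grid n (Suc i)} \<Longrightarrow> F s \<le> c i"
    and s: "s \<in> {0..<1}"
  shows "F s \<le> grid_step c0 c n s"
proof (cases "s < 1/2")
  case True
  then show ?thesis using low s grid_step_low by simp
next
  case False
  then obtain i where "i < n" "s \<in> {grid n i..<grid n (Suc i)}"
    using grid_cell_exists[OF n, of s] s by auto
  then show ?thesis using cell grid_step_cell by simp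
qed

lemma set_integral_le_grid_step:
  assumes low: "\<And>s. 0 \<le> s \<Longrightarrow> s < 1/2 \<Longrightarrow> F s \<le> c0"
    and cell: "\<And>i s. i < n \<Longrightarrow> s \<in> {grid n i..<grid n (Suc i)} \<Longrightarrow> F s \<le> c i"
    and nonneg: "0 \<le> c0" "\<And>i. i < n \<Longrightarrow> 0 \<le> c i"
  shows "(LINT s:{0..1}|lborel. F s) \<le> c0 / 2 + (\<Sum>i<n. c i) / (2 * real n)"
proof (cases "set_integrable lborel {0..1} F")
  case True
  have "indicator {0..1} s *\<^sub>R F s \<le> grid_step c0 c n s" if "s \<noteq> 1" for s
  proof (cases "s \<in> {0..<1}")
    case True
    then show ?thesis using le_grid_step[OF low cell] by simp
  next
    case False
    then have "s \<notin> {0..1}" using that by auto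
    moreover have "0 \<le> grid_step c0 c n s" using nonneg by (intro grid_step_nonneg) auto
    ultimately show ?thesis by simp
  qed
  then have "(LINT s:{0..1}|lborel. F s) \<le> integral\<^sup>L lborel (grid_step c0 c n)"
    unfolding set_lebesgue_integral_def using AE_lborel_singleton[of 1]
    by (intro integral_mono_AE True[unfolded set_integrable_def] integrable_grid_step) auto
  then show ?thesis by (simp add: integral_grid_step)
next
  case False
  have "0 \<le> (\<Sum>i<n. c i)" using nonneg(2) by (intro sum_nonneg) auto
  then show ?thesis using False nonneg(1)
    by (simp add: set_lebesgue_integral_def set_integrable_def not_integrable_integral_eq)
qed

end

section \<open>Unboundedness of the discrete slope energy\<close>

lemma nn_integral_Ico_SUP:
  fixes f :: "real \<Rightarrow> real" and c :: "nat \<Rightarrow> real"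
  assumes meas: "(\<lambda>x. f x * indicator {a..<b} x) \<in> borel_measurable borel"
    and c: "incseq c" "c \<longlonglongrightarrow> b"
  shows "(\<integral>\<^sup>+x. ennreal (f x * indicator {a..<b} x) \<partial>lborel) =
    (SUP k. \<integral>\<^sup>+x. ennreal (f x * indicator {a..<c k} x) \<partial>lborel)"
proof -
  have cb: "c k \<le> b" for k by (rule incseq_le[OF c])
  have piece: "f x * indicator {a..<c k} x = f x * indicator {a..<b} x * indicator {..<c k} x" for x k
    using cb[of k] by (auto simp: indicator_def)
  have sup: "ennreal (f x * indicator {a..<b} x) = (SUP k. ennreal (f x * indicator {a..<c k} x))" for x
  proof (rule antisym)
    show "(SUP k. ennreal (f x * indicator {a..<c k} x)) \<le> ennreal (f x * indicator {a..<b} x)"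
    proof (rule SUP_least)
      show "ennreal (f x * indicator {a..<c k} x) \<le> ennreal (f x * indicator {a..<b} x)" for k
        using cb[of k] by (auto simp: indicator_def)
    qed
  next
    show "ennreal (f x * indicator {a..<b} x) \<le> (SUP k. ennreal (f x * indicator {a..<c k} x))"
    proof (cases "x \<in> {a..<b}")
      case True
      then have "eventually (\<lambda>k. x < c k) sequentially"
        by (intro order_tendstoD(1)[OF c(2)]) auto
      then obtain k where "x < c k"
        by (meson eventually_sequentially order_refl)
      then have "ennreal (f x * indicator {a..<b} x) = ennreal (f x * indicator {a..<c k} x)"
        using True by simp
      then show ?thesis
        using SUP_upper[of k UNIV "\<lambda>k. ennreal (f x * indicator {a..<c k} x)"] by simp
    qed simp
  qed
  have inc: "incseq (\<lambda>k x. ennreal (f x * indicator {a..<c k} x))"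
  proof (intro incseq_SucI le_funI)
    show "ennreal (f x * indicator {a..<c k} x) \<le> ennreal (f x * indicator {a..<c (Suc k)} x)" for k x
      using incseq_SucD[OF c(1), of k] by (auto simp: indicator_def)
  qed
  show ?thesis
    unfolding sup
    by (rule nn_integral_monotone_convergence_SUP[OF inc]) (use meas in \<open>simp add: piece\<close>)
qed

definition grid_slope :: "(real \<Rightarrow> real) \<Rightarrow> nat \<Rightarrow> nat \<Rightarrow> real" where
  "grid_slope w n i = chord_slope w (grid n i) (grid n (Suc i))"

definition slope_energy :: "(real \<Rightarrow> real) \<Rightarrow> nat \<Rightarrow> real" where
  "slope_energy w n = (\<Sum>i<n. (grid_slope w n i)\<^sup>2) / (2 * real n)"

context
  fixes w :: "real \<Rightarrow> real"
  assumes conv: "convex_on {0..1} w" and mono: "mono_on {0..1} w"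
begin

lemma grid_slope_nonneg: "n \<ge> 1 \<Longrightarrow> i < n \<Longrightarrow> 0 \<le> grid_slope w n i"
  unfolding grid_slope_def using grid_nonneg[of n i] grid_le_one[of n "Suc i"] grid_strict_mono[of n i "Suc i"]
  by (intro chord_slope_nonneg[OF conv mono]) auto

lemma grid_slope_mono:
  assumes n: "n \<ge> 1"
  shows "mono_on {..<n} (grid_slope w n)"
proof (rule mono_onI)
  fix i j assume ij: "i \<in> {..<n}" "j \<in> {..<n}" "i \<le> j"
  show "grid_slope w n i \<le> grid_slope w n j"
    unfolding grid_slope_def
  proof (rule chord_slope_mono[OF conv])
    show "grid n i \<le> grid n j" "grid n (Suc i) \<le> grid n (Suc j)"
      using ij by (simp_all add: grid_mono)
    show "grid n i < grid n (Suc i)" "grid n j < grid n (Suc j)"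
      using n by (simp_all add: grid_strict_mono)
    show "grid n i \<in> {0..1}" "grid n (Suc i) \<in> {0..1}" "grid n j \<in> {0..1}" "grid n (Suc j) \<in> {0..1}"
      using ij grid_le_one[OF n] grid_nonneg[of n] by auto
  qed
qed

text \<open>The last cell is cut off because it has no successor whose chord slope bounds w' there.\<close>

lemma rderiv_sq_le_grid_step:
  assumes n: "n \<ge> 1" and s: "s \<in> {0..<1}"
  defines "d \<equiv> \<lambda>i. if Suc i < n then (grid_slope w n (Suc i))\<^sup>2 else 0"
  shows "(rderiv w s)\<^sup>2 * indicator {0..<1 - 1 / (2 * real n)} s
    \<le> grid_step ((chord_slope w (1/2) 1)\<^sup>2) d n s"
proof (rule le_grid_step[OF n _ _ s])
  fix s :: real assume "0 \<le> s" "s < 1/2"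
  then have "0 \<le> rderiv w s" "rderiv w s \<le> chord_slope w (1/2) 1"
    using rderiv_nonneg[OF conv mono] rderiv_le_chord_slope[OF conv mono] by auto
  then show "(rderiv w s)\<^sup>2 * indicator {0..<1 - 1 / (2 * real n)} s \<le> (chord_slope w (1/2) 1)\<^sup>2"
    by (simp add: indicator_def power_mono)
next
  fix i s assume i: "i < n" and s: "s \<in> {grid n i..<grid n (Suc i)}"
  show "(rderiv w s)\<^sup>2 * indicator {0..<1 - 1 / (2 * real n)} s \<le> d i"
  proof (cases "Suc i < n")
    case True
    have "0 \<le> grid n i" "grid n (Suc (Suc i)) \<le> 1" "grid n (Suc i) < grid n (Suc (Suc i))"
      using grid_nonneg[of n i] grid_le_one[OF n, of "Suc (Suc i)"] grid_strict_mono[OF n] True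
      by auto
    then have "0 \<le> rderiv w s" "rderiv w s \<le> grid_slope w n (Suc i)"
      unfolding grid_slope_def using s
      by (auto intro!: rderiv_nonneg[OF conv mono] rderiv_le_chord_slope[OF conv mono])
    then show ?thesis using True by (simp add: d_def indicator_def power_mono)
  next
    case False
    then have "grid n i = 1 - 1 / (2 * real n)" using i n by (simp add: grid_def field_simps)
    then show ?thesis using False s by (simp add: d_def)
  qed
qed

lemma nn_integral_rderiv_sq_le:
  assumes n: "n \<ge> 1"
  shows "(\<integral>\<^sup>+s. ennreal ((rderiv w s)\<^sup>2 * indicator {0..<1 - 1 / (2 * real n)} s) \<partial>lborel)
    \<le> ennreal ((chord_slope w (1/2) 1)\<^sup>2 / 2 + slope_energy w n)"
proof -
  define D where "D = (chord_slope w (1/2) 1)\<^sup>2"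
  define d where "d = (\<lambda>i. if Suc i < n then (grid_slope w n (Suc i))\<^sup>2 else 0)"
  have step_nonneg: "0 \<le> grid_step D d n s" for s
    using n by (intro grid_step_nonneg) (auto simp: D_def d_def)
  have "ennreal ((rderiv w s)\<^sup>2 * indicator {0..<1 - 1 / (2 * real n)} s) \<le> ennreal (grid_step D d n s)"
    for s
  proof (cases "s \<in> {0..<1}")
    case True
    then show ?thesis
      unfolding D_def d_def by (intro ennreal_leI rderiv_sq_le_grid_step n)
  next
    case False
    have "{0..<1 - 1 / (2 * real n)} \<subseteq> {0..<1}" by auto
    then have "s \<notin> {0..<1 - 1 / (2 * real n)}" using False by blast
    then show ?thesis by simp
  qed
  then have "(\<integral>\<^sup>+s. ennreal ((rderiv w s)\<^sup>2 * indicator {0..<1 - 1 / (2 * real n)} s) \<partial>lborel)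
      \<le> (\<integral>\<^sup>+s. ennreal (grid_step D d n s) \<partial>lborel)"
    by (intro nn_integral_mono)
  also have "\<dots> = ennreal (D / 2 + (\<Sum>i<n. d i) / (2 * real n))"
    using step_nonneg integrable_grid_step[OF n]
    by (subst nn_integral_eq_integral) (auto simp: integral_grid_step[OF n])
  also have "\<dots> \<le> ennreal (D / 2 + slope_energy w n)"
  proof -
    obtain m where m: "n = Suc m" using n by (cases n) auto
    have "(\<Sum>i<n. d i) = (\<Sum>i<m. (grid_slope w n (Suc i))\<^sup>2)"
      unfolding m d_def by simp
    also have "\<dots> \<le> (\<Sum>i<n. (grid_slope w n i)\<^sup>2)"
      unfolding m sum.lessThan_Suc_shift by simp
    finally show ?thesis
      unfolding slope_energy_def by (intro ennreal_leI add_left_mono divide_right_mono) auto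
  qed
  finally show ?thesis unfolding D_def .
qed

lemma slope_energy_unbounded:
  assumes "\<not> set_integrable lborel {0..<1} (\<lambda>s. (rderiv w s)\<^sup>2)"
  shows "\<exists>n\<ge>1. N < slope_energy w n"
proof (rule ccontr)
  assume "\<not> ?thesis"
  then have bound: "slope_energy w n \<le> N" if "n \<ge> 1" for n
    using that by auto
  define c where "c k = 1 - 1 / (2 * real (Suc k))" for k
  have "incseq c"
    unfolding incseq_Suc_iff c_def by (simp add: frac_le)
  moreover have "c \<longlonglongrightarrow> 1"
  proof -
    have "(\<lambda>k. 1 - inverse (real (Suc k)) / 2) \<longlonglongrightarrow> 1 - 0 / 2"
      by (intro tendsto_intros LIMSEQ_inverse_real_of_nat) simp
    moreover have "inverse (real (Suc k)) / 2 = 1 / (2 * real (Suc k))" for k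
      by (simp add: inverse_eq_divide)
    ultimately show ?thesis unfolding c_def by (simp only:) simp
  qed
  moreover have "rderiv w \<in> borel_measurable (restrict_space borel {0..<1})"
    by (rule borel_measurable_mono_on_fnc[OF rderiv_mono_on[OF conv mono]])
  then have "(\<lambda>s. (rderiv w s)\<^sup>2) \<in> borel_measurable (restrict_space borel {0..<1})"
    by measurable
  then have meas: "(\<lambda>s. (rderiv w s)\<^sup>2 * indicator {0..<1} s) \<in> borel_measurable borel"
    by (subst mult.commute, subst (asm) borel_measurable_restrict_space_iff) auto
  ultimately have "(\<integral>\<^sup>+s. ennreal ((rderiv w s)\<^sup>2 * indicator {0..<1} s) \<partial>lborel)
      = (SUP k. \<integral>\<^sup>+s. ennreal ((rderiv w s)\<^sup>2 * indicator {0..<c k} s) \<partial>lborel)"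
    by (intro nn_integral_Ico_SUP)
  also have "\<dots> \<le> ennreal ((chord_slope w (1/2) 1)\<^sup>2 / 2 + N)"
  proof (rule SUP_least)
    fix k
    have "(\<integral>\<^sup>+s. ennreal ((rderiv w s)\<^sup>2 * indicator {0..<c k} s) \<partial>lborel)
        \<le> ennreal ((chord_slope w (1/2) 1)\<^sup>2 / 2 + slope_energy w (Suc k))"
      using nn_integral_rderiv_sq_le[of "Suc k"] by (simp add: c_def)
    also have "\<dots> \<le> ennreal ((chord_slope w (1/2) 1)\<^sup>2 / 2 + N)"
      using bound[of "Suc k"] by (simp add: ennreal_leI)
    finally show "(\<integral>\<^sup>+s. ennreal ((rderiv w s)\<^sup>2 * indicator {0..<c k} s) \<partial>lborel)
        \<le> ennreal ((chord_slope w (1/2) 1)\<^sup>2 / 2 + N)" .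
  qed
  finally have "integrable lborel (\<lambda>s. (rderiv w s)\<^sup>2 * indicator {0..<1} s)"
    using meas by (intro integrableI_nonneg) (auto intro: le_less_trans)
  then show False
    using assms by (simp add: set_integrable_def mult.commute)
qed

end

section \<open>The measure dw\<close>

definition wcdf :: "(real \<Rightarrow> real) \<Rightarrow> real \<Rightarrow> real" where
  "wcdf w x = (if x < 0 then 0 else if x \<le> 1 then w x else w 1)"

lemma wmeasure_eq: "wmeasure w = interval_measure (wcdf w)"
  by (simp add: wmeasure_def wcdf_def[abs_def])

lemma sets_wmeasure [simp]: "sets (wmeasure w) = sets borel"
  by (simp add: wmeasure_eq)

context
  fixes w :: "real \<Rightarrow> real" assumes w: "w \<in> Wicx"
begin

lemma wcdf_mono: "x \<le> y \<Longrightarrow> wcdf w x \<le> wcdf w y"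
  using w mono_onD[of "{0..1}" w] by (auto simp: wcdf_def Wicx_def)

lemma wcdf_continuous_at_right: "continuous (at_right x) (wcdf w)"
  unfolding continuous_within
proof -
  consider "x < 0" | "0 \<le> x" "x < 1" | "1 \<le> x" by linarith
  then show "(wcdf w \<longlongrightarrow> wcdf w x) (at_right x)"
  proof cases
    case 1
    have "eventually (\<lambda>y. wcdf w y = wcdf w x) (at_right x)"
      using eventually_at_right_real[OF 1] by eventually_elim (use 1 in \<open>auto simp: wcdf_def\<close>)
    then show ?thesis by (rule tendsto_eventually)
  next
    case 2
    have "eventually (\<lambda>y. w y = wcdf w y) (at_right x)"
      using eventually_at_right_real[OF 2(2)] by eventually_elim (use 2 in \<open>auto simp: wcdf_def\<close>)
    moreover have "(w \<longlongrightarrow> w x) (at_right x)"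
      using w 2 by (intro continuous_at_right_convex_mono[of 0 1]) (auto simp: Wicx_def)
    ultimately show ?thesis using 2 by (auto simp: wcdf_def elim: tendsto_cong[THEN iffD1, rotated])
  next
    case 3
    have "eventually (\<lambda>y. wcdf w y = wcdf w x) (at_right x)"
      using eventually_at_right_less[of x] by eventually_elim (use 3 in \<open>auto simp: wcdf_def\<close>)
    then show ?thesis by (rule tendsto_eventually)
  qed
qed

lemma measure_wmeasure_Ioc:
  assumes "0 \<le> p" "p \<le> q" "q \<le> 1"
  shows "measure (wmeasure w) {p<..q} = w q - w p"
  using assms unfolding wmeasure_eq
  by (subst measure_interval_measure_Ioc[OF _ wcdf_mono wcdf_continuous_at_right]) (auto simp: wcdf_def)

lemma finite_measure_wmeasure: "finite_measure (wmeasure w)"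
proof -
  have "((wcdf w) \<longlongrightarrow> 0) at_bot"
    by (rule tendsto_eventually) (auto simp: eventually_at_bot_linorder wcdf_def intro!: exI[of _ "-1"])
  moreover have "((wcdf w) \<longlongrightarrow> w 1) at_top"
    by (rule tendsto_eventually) (auto simp: eventually_at_top_linorder wcdf_def intro!: exI[of _ 2])
  moreover have "0 \<le> w 1" using w by (simp add: Wicx_def)
  ultimately have "finite_borel_measure (interval_measure (wcdf w))"
    using wcdf_mono wcdf_continuous_at_right by (intro finite_borel_measure_interval_measure)
  then show ?thesis unfolding wmeasure_eq by (simp add: finite_borel_measure_def)
qed

end

section \<open>Step quantile functions and the objective\<close>

lemma continuous_at_right_indicator_Ico:
  fixes a b t :: real
  shows "continuous (at_right t) (indicator {a..<b} :: real \<Rightarrow> real)"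
  unfolding continuous_within
proof (rule tendsto_eventually)
  consider "t < a" | "a \<le> t" "t < b" | "b \<le> t" by linarith
  then show "eventually (\<lambda>x. indicator {a..<b} x = (indicator {a..<b} t :: real)) (at_right t)"
  proof cases
    case 1
    show ?thesis using eventually_at_right_real[OF 1] by eventually_elim (use 1 in auto)
  next
    case 2
    show ?thesis using eventually_at_right_real[OF 2(2)] by eventually_elim (use 2 in auto)
  next
    case 3
    show ?thesis using eventually_at_right_less[of t] by eventually_elim (use 3 in auto)
  qed
qed

lemma continuous_at_right_indicator_Ici:
  fixes a t :: real
  shows "continuous (at_right t) (indicator {a..} :: real \<Rightarrow> real)"
  unfolding continuous_within
proof (rule tendsto_eventually)
  consider "t < a" | "a \<le> t" by linarith
  then show "eventually (\<lambda>x. indicator {a..} x = (indicator {a..} t :: real)) (at_right t)"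
  proof cases
    case 1
    show ?thesis using eventually_at_right_real[OF 1] by eventually_elim (use 1 in auto)
  next
    case 2
    show ?thesis using eventually_at_right_less[of t] by eventually_elim (use 2 in auto)
  qed
qed

definition grid_quantile :: "(nat \<Rightarrow> real) \<Rightarrow> nat \<Rightarrow> real \<Rightarrow> real" where
  "grid_quantile c n s = grid_step 0 c n s + c (n - 1) * indicator {1..} s"

lemma grid_quantile_measurable: "grid_quantile c n \<in> borel_measurable borel"
  unfolding grid_quantile_def[abs_def] grid_step_def by measurable

lemma grid_quantile_continuous_at_right: "continuous (at_right t) (grid_quantile c n)"
  unfolding grid_quantile_def[abs_def] grid_step_def
  by (intro continuous_intros continuous_at_right_indicator_Ico continuous_at_right_indicator_Ici)

context
  fixes n :: nat and c :: "nat \<Rightarrow> real"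
  assumes n: "n \<ge> 1" and c_mono: "mono_on {..<n} c" and c_nonneg: "\<And>i. i < n \<Longrightarrow> 0 \<le> c i"
begin

lemma grid_quantile_low: "s < 1/2 \<Longrightarrow> grid_quantile c n s = 0"
  using grid_step_low[OF n] grid_step_outside[OF n] by (cases "0 \<le> s") (auto simp: grid_quantile_def)

lemma grid_quantile_cell:
  "i < n \<Longrightarrow> s \<in> {grid n i..<grid n (Suc i)} \<Longrightarrow> grid_quantile c n s = c i"
  using grid_step_cell[OF n] grid_le_one[OF n, of "Suc i"] by (simp add: grid_quantile_def)

lemma grid_quantile_high: "1 \<le> s \<Longrightarrow> grid_quantile c n s = c (n - 1)"
  using grid_step_outside[OF n] by (simp add: grid_quantile_def)

lemma grid_quantile_cases:
  obtains "grid_quantile c n s = 0" | i where "i < n" "grid_quantile c n s = c i"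
proof -
  consider "s < 1/2" | "1/2 \<le> s" "s < 1" | "1 \<le> s" by linarith
  then show ?thesis
  proof cases
    case 1
    then show ?thesis using that(1) grid_quantile_low by blast
  next
    case 2
    then obtain i where "i < n" "s \<in> {grid n i..<grid n (Suc i)}" using grid_cell_exists[OF n] by blast
    then show ?thesis using that(2) grid_quantile_cell by blast
  next
    case 3
    then show ?thesis using that(2)[of "n - 1"] grid_quantile_high n by simp
  qed
qed

lemma grid_quantile_bounds: "0 \<le> grid_quantile c n s" "grid_quantile c n s \<le> c (n - 1)"
proof -
  have "c i \<le> c (n - 1)" if "i < n" for i
    using that by (intro mono_onD[OF c_mono]) auto
  then show "0 \<le> grid_quantile c n s" "grid_quantile c n s \<le> c (n - 1)"
    using c_nonneg[of "n - 1"] n by (cases rule: grid_quantile_cases[of s]; auto simp: c_nonneg)+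
qed

lemma grid_quantile_mono: "mono (grid_quantile c n)"
proof (rule monoI)
  fix s t :: real assume st: "s \<le> t"
  consider "s < 1/2" | "1 \<le> t" | "1/2 \<le> s" "t < 1" by linarith
  then show "grid_quantile c n s \<le> grid_quantile c n t"
  proof cases
    case 1
    then show ?thesis using grid_quantile_low grid_quantile_bounds(1) by simp
  next
    case 2
    then show ?thesis using grid_quantile_high grid_quantile_bounds(2) by simp
  next
    case 3
    obtain i where i: "i < n" "s \<in> {grid n i..<grid n (Suc i)}"
      using grid_cell_exists[OF n, of s] 3 st by auto
    obtain j where j: "j < n" "t \<in> {grid n j..<grid n (Suc j)}"
      using grid_cell_exists[OF n, of t] 3 st by auto
    have "i \<le> j" using i(2) j(2) st by (intro grid_index_le[of n]) auto
    then show ?thesis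
      using grid_quantile_cell[OF i] grid_quantile_cell[OF j] i(1) j(1) mono_onD[OF c_mono] by simp
  qed
qed

lemma grid_quantile_Lim_at_left: "grid_quantile c n 1 = Lim (at_left 1) (grid_quantile c n)"
proof -
  have "grid n (n - 1) < 1"
    using grid_strict_mono[OF n, of "n - 1" n] n by (simp add: grid_def)
  then have "eventually (\<lambda>s. grid_quantile c n s = c (n - 1)) (at_left 1)"
  proof (rule eventually_mono[OF eventually_at_left_real])
    fix s assume "s \<in> {grid n (n - 1)<..<1}"
    moreover have "grid n (Suc (n - 1)) = 1" using n by (simp add: grid_def)
    ultimately show "grid_quantile c n s = c (n - 1)" using n by (intro grid_quantile_cell) auto
  qed
  then have "Lim (at_left 1) (grid_quantile c n) = c (n - 1)"
    by (intro tendsto_Lim tendsto_eventually) auto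
  then show ?thesis using grid_quantile_high by simp
qed

lemma grid_quantile_in_Qset: "grid_quantile c n \<in> Qset"
proof -
  have "(\<lambda>s. (grid_quantile c n s)\<^sup>2) \<in> borel_measurable borel"
    by (intro borel_measurable_power grid_quantile_measurable)
  then have "set_integrable lborel {0..<1} (\<lambda>s. (grid_quantile c n s)\<^sup>2)"
    unfolding set_integrable_def using grid_quantile_bounds
    by (intro integrableI_bounded_set_indicator[where B="(c (n - 1))\<^sup>2"])
      (auto intro!: power_mono)
  then show ?thesis
    using grid_quantile_mono grid_quantile_continuous_at_right grid_quantile_Lim_at_left
    by (auto simp: Qset_def mono_on_def monoD)
qed

lemma set_integral_grid_quantile_sq_le:
  "(LINT s:{0..1}|lborel. (grid_quantile c n s - beta)\<^sup>2)
    \<le> beta\<^sup>2 / 2 + (\<Sum>i<n. (c i - beta)\<^sup>2) / (2 * real n)"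
  by (rule set_integral_le_grid_step[OF n]) (simp_all add: grid_quantile_low grid_quantile_cell)

lemma set_integral_grid_quantile_mult_le:
  assumes K: "0 \<le> K" "\<And>s. 1/2 \<le> s \<Longrightarrow> s < 1 \<Longrightarrow> R s \<le> K"
  shows "(LINT s:{0..1}|lborel. grid_quantile c n s * R s) \<le> K * (\<Sum>i<n. c i) / (2 * real n)"
proof -
  have "(LINT s:{0..1}|lborel. grid_quantile c n s * R s) \<le> 0 / 2 + (\<Sum>i<n. K * c i) / (2 * real n)"
  proof (rule set_integral_le_grid_step[OF n])
    fix i s assume i: "i < n" and s: "s \<in> {grid n i..<grid n (Suc i)}"
    then have "R s \<le> K"
      using half_le_grid[of n i] grid_le_one[OF n, of "Suc i"] K(2) by auto
    then show "grid_quantile c n s * R s \<le> K * c i"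
      using mult_left_mono[OF _ c_nonneg[OF i]] grid_quantile_cell[OF i s] by (simp add: mult.commute)
  qed (use K c_nonneg grid_quantile_low in auto)
  then show ?thesis by (simp add: sum_distrib_left)
qed

lemma set_integral_wmeasure_grid_quantile:
  assumes w: "w \<in> Wicx"
  shows "set_integrable (wmeasure w) {0..1} (grid_quantile c n)"
    and "(\<Sum>i<n. c i * (w (grid n (Suc i)) - w (grid n i)))
      \<le> (LINT s:{0..1}|wmeasure w. grid_quantile c n s)"
proof -
  interpret finite_measure "wmeasure w" by (rule finite_measure_wmeasure[OF w])
  have "grid_quantile c n \<in> borel_measurable (wmeasure w)"
    by (subst measurable_cong_sets[OF sets_wmeasure refl]) (rule grid_quantile_measurable)
  then show int: "set_integrable (wmeasure w) {0..1} (grid_quantile c n)"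
    unfolding set_integrable_def using grid_quantile_bounds
    by (intro integrableI_bounded_set_indicator[where B="c (n - 1)"]) (auto simp: less_top[symmetric])
  define h where "h s = (\<Sum>i<n. c i * indicator {grid n i<..grid n (Suc i)} s)" for s
  have int_cell: "integrable (wmeasure w) (\<lambda>s. c i * indicator {grid n i<..grid n (Suc i)} s)" for i
    by (intro integrable_mult_right integrable_real_indicator) (auto simp: less_top[symmetric])
  have "integral\<^sup>L (wmeasure w) h = (\<Sum>i<n. c i * measure (wmeasure w) {grid n i<..grid n (Suc i)})"
    unfolding h_def by (simp only: Bochner_Integration.integral_sum[OF int_cell]) simp
  also have "\<dots> = (\<Sum>i<n. c i * (w (grid n (Suc i)) - w (grid n i)))"
    using grid_nonneg grid_mono grid_le_one[OF n]
    by (intro sum.cong refl) (simp add: measure_wmeasure_Ioc[OF w])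
  finally have "(\<Sum>i<n. c i * (w (grid n (Suc i)) - w (grid n i))) = integral\<^sup>L (wmeasure w) h" ..
  also have "\<dots> \<le> (LINT s:{0..1}|wmeasure w. grid_quantile c n s)"
    unfolding set_lebesgue_integral_def
  proof (rule integral_mono[OF _ int[unfolded set_integrable_def]])
    show "integrable (wmeasure w) h"
      unfolding h_def by (intro Bochner_Integration.integrable_sum int_cell)
    show "h s \<le> indicator {0..1} s *\<^sub>R grid_quantile c n s" for s
    proof (cases "\<exists>i<n. s \<in> {grid n i<..grid n (Suc i)}")
      case True
      then obtain i where i: "i < n" "s \<in> {grid n i<..grid n (Suc i)}" by blast
      have "h s = c i"
        unfolding h_def using i grid_index_le[of n]
        by (intro sum_mult_indicator_eq_single) (auto intro: antisym)
      also have "\<dots> = grid_quantile c n (grid n i)"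
        using grid_strict_mono[OF n, of i "Suc i"] by (intro grid_quantile_cell[symmetric] i) auto
      also have "\<dots> \<le> grid_quantile c n s"
        using i by (intro monoD[OF grid_quantile_mono]) auto
      finally show ?thesis
        using i grid_nonneg[of n i] grid_le_one[OF n, of "Suc i"] by auto
    next
      case False
      then have "h s = 0" unfolding h_def by (intro sum.neutral) auto
      then show ?thesis using grid_quantile_bounds(1) by (simp add: indicator_def)
    qed
  qed
  finally show "(\<Sum>i<n. c i * (w (grid n (Suc i)) - w (grid n i)))
      \<le> (LINT s:{0..1}|wmeasure w. grid_quantile c n s)" .
qed

end

lemma quantile0_bounded_above:
  assumes M: "prob_space M" and X: "X \<in> borel_measurable M"
    and nonneg: "AE x in M. 0 \<le> X x" and t: "t < 1"
  shows "\<exists>K\<ge>0. \<forall>u\<in>{0..t}. quantile0 M X u \<le> K"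
proof -
  interpret prob_space M by (rule M)
  let ?P = "\<lambda>y. measure M {x\<in>space M. X x \<le> y}"
  have "cdf (distr M borel X) = ?P"
  proof
    fix y
    have "cdf (distr M borel X) y = measure M (X -` {..y} \<inter> space M)"
      using X by (simp add: cdf_def measure_distr)
    also have "X -` {..y} \<inter> space M = {x\<in>space M. X x \<le> y}" by auto
    finally show "cdf (distr M borel X) y = ?P y" .
  qed
  then have "(?P \<longlongrightarrow> 1) at_top"
    using real_distribution.cdf_lim_at_top_prob[OF real_distribution_distr[OF X]] by simp
  then have "eventually (\<lambda>y. t < ?P y) at_top" using t by (rule order_tendstoD(1))
  then obtain y where y: "t < ?P y" by (auto simp: eventually_at_top_linorder)
  have pos: "0 \<le> z" if "u < ?P z" "0 \<le> u" for z u
  proof (rule ccontr)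
    assume "\<not> 0 \<le> z"
    then have "AE x in M. \<not> X x \<le> z" by (intro eventually_mono[OF nonneg]) auto
    then have "?P z = 0" by (simp add: measure_def emeasure_eq_0_AE)
    then show False using that by simp
  qed
  have "quantile0 M X u \<le> max y 0" if "u \<in> {0..t}" for u
  proof -
    have "quantile0 M X u \<le> y"
      unfolding quantile0_def using that y pos
      by (intro cInf_lower bdd_belowI[of _ 0]) auto
    then show ?thesis by simp
  qed
  then show ?thesis by (intro exI[of _ "max y 0"]) auto
qed

lemma Lfun_grid_quantile_le:
  assumes w: "w \<in> Wicx" and n: "n \<ge> 1"
    and c: "mono_on {..<n} c" "\<And>i. i < n \<Longrightarrow> 0 \<le> c i"
    and lam: "0 \<le> lam" and K: "0 \<le> K" "\<And>s. 1/2 \<le> s \<Longrightarrow> s < 1 \<Longrightarrow> quantile M \<rho> (1 - s) \<le> K"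
  shows "Lfun M \<rho> X0 (grid_quantile c n) w beta lam
    \<le> beta\<^sup>2 / 2 + (LINT s:{0..1}|wmeasure w. quantile M X0 s)
      + (\<Sum>i<n. (c i - beta)\<^sup>2 + lam * K * c i - c i * grid_slope w n i) / (2 * real n)"
proof -
  have "w (grid n (Suc i)) - w (grid n i) = grid_slope w n i / (2 * real n)" for i
    using n by (simp add: grid_slope_def chord_slope_def grid_Suc)
  then have "(\<Sum>i<n. c i * grid_slope w n i) / (2 * real n)
      \<le> (LINT s:{0..1}|wmeasure w. grid_quantile c n s)"
    using set_integral_wmeasure_grid_quantile(2)[OF n c w] by (simp add: sum_divide_distrib)
  moreover have "lam * (LINT s:{0..1}|lborel. grid_quantile c n s * quantile M \<rho> (1 - s))
      \<le> lam * (K * (\<Sum>i<n. c i) / (2 * real n))"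
    using set_integral_grid_quantile_mult_le[OF n c K] lam by (intro mult_left_mono)
  moreover note set_integral_grid_quantile_sq_le[OF n c, of beta]
  moreover have "(\<Sum>i<n. (c i - beta)\<^sup>2 + lam * K * c i - c i * grid_slope w n i) / (2 * real n)
      = (\<Sum>i<n. (c i - beta)\<^sup>2) / (2 * real n) + lam * (K * (\<Sum>i<n. c i) / (2 * real n))
        - (\<Sum>i<n. c i * grid_slope w n i) / (2 * real n)"
    by (simp add: sum.distrib sum_subtractf sum_distrib_left add_divide_distrib diff_divide_distrib
        mult.assoc)
  ultimately show ?thesis unfolding Lfun_def by linarith
qed

lemma average_half_slope_terms_le:
  fixes g :: "nat \<Rightarrow> real" and b l :: real
  assumes n: "n \<ge> 1"
  shows "(\<Sum>i<n. (g i / 2 - b)\<^sup>2 + l * (g i / 2) - g i / 2 * g i) / (2 * real n)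
    \<le> b\<^sup>2 / 2 + (l / 2 - b)\<^sup>2 - (\<Sum>i<n. (g i)\<^sup>2) / (2 * real n) / 8"
proof -
  have "(g i / 2 - b)\<^sup>2 + l * (g i / 2) - g i / 2 * g i \<le> (b\<^sup>2 + 2 * (l / 2 - b)\<^sup>2) - (g i)\<^sup>2 / 8" for i
  proof -
    have "0 \<le> 2 * (l / 2 - b - g i / 4)\<^sup>2" by simp
    then show ?thesis by (simp add: power2_eq_square algebra_simps)
  qed
  then have "(\<Sum>i<n. (g i / 2 - b)\<^sup>2 + l * (g i / 2) - g i / 2 * g i)
      \<le> (\<Sum>i<n. (b\<^sup>2 + 2 * (l / 2 - b)\<^sup>2) - (g i)\<^sup>2 / 8)"
    by (rule sum_mono)
  also have "\<dots> = real n * (b\<^sup>2 + 2 * (l / 2 - b)\<^sup>2) - (\<Sum>i<n. (g i)\<^sup>2) / 8"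
    by (simp add: sum_subtractf sum_divide_distrib)
  finally have "(\<Sum>i<n. (g i / 2 - b)\<^sup>2 + l * (g i / 2) - g i / 2 * g i) / (2 * real n)
      \<le> (real n * (b\<^sup>2 + 2 * (l / 2 - b)\<^sup>2) - (\<Sum>i<n. (g i)\<^sup>2) / 8) / (2 * real n)"
    by (rule divide_right_mono) simp
  also have "\<dots> = b\<^sup>2 / 2 + (l / 2 - b)\<^sup>2 - (\<Sum>i<n. (g i)\<^sup>2) / (2 * real n) / 8"
    using n by (simp add: field_simps)
  finally show ?thesis .
qed

theorem lemma5p2:
  fixes M :: "'a measure" and \<rho> X0 :: "'a \<Rightarrow> real" and beta lam :: real
    and w :: "real \<Rightarrow> real"
  assumes "prob_space M" and "complete_measure M" and "nonatomic M"
    and "\<rho> \<in> borel_measurable M" and "integrable M (\<lambda>x. (\<rho> x)\<^sup>2)"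
    and "AE x in M. \<rho> x > 0" and "prob_space.variance M \<rho> > 0"
    and "X0 \<in> borel_measurable M" and "\<exists>C. AE x in M. \<bar>X0 x\<bar> \<le> C"
    and "lam > 0"
    and "w \<in> Wicx"
    and "(w \<longlongrightarrow> w 1) (at_left 1)"
    and "\<not> set_integrable lborel {0..<1} (\<lambda>s. (rderiv w s)\<^sup>2)"
  shows "\<forall>B::real. \<exists>Q\<in>Qset. set_integrable (wmeasure w) {0..1} Q \<and> Lfun M \<rho> X0 Q w beta lam < B"
proof
  fix B :: real
  note w = \<open>w \<in> Wicx\<close>
  have conv: "convex_on {0..1} w" and mono: "mono_on {0..1} w" using w by (auto simp: Wicx_def)
  have "AE x in M. 0 \<le> \<rho> x" by (intro eventually_mono[OF assms(6)]) auto
  then obtain K where K: "0 \<le> K" "\<And>u. u \<in> {0..1/2} \<Longrightarrow> quantile0 M \<rho> u \<le> K"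
    using quantile0_bounded_above[OF assms(1,4), of "1/2"] by auto
  have K_bound: "quantile M \<rho> (1 - s) \<le> K" if "1/2 \<le> s" "s < 1" for s
    using K(2)[of "1 - s"] that by (simp add: quantile_def)
  define C0 where "C0 = (LINT s:{0..1}|wmeasure w. quantile M X0 s)"
  define a where "a = lam * K / 2 - beta"
  obtain n where n: "n \<ge> 1" and energy: "8 * (beta\<^sup>2 + C0 + a\<^sup>2 - B) < slope_energy w n"
    using slope_energy_unbounded[OF conv mono assms(13)] by blast
  define c where "c i = grid_slope w n i / 2" for i
  have c: "mono_on {..<n} c" "\<And>i. i < n \<Longrightarrow> 0 \<le> c i"
    using grid_slope_mono[OF conv mono n] grid_slope_nonneg[OF conv mono n]
    by (auto simp: c_def mono_on_def)
  have "Lfun M \<rho> X0 (grid_quantile c n) w beta lam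
      \<le> beta\<^sup>2 / 2 + C0 + (\<Sum>i<n. (c i - beta)\<^sup>2 + lam * K * c i - c i * grid_slope w n i) / (2 * real n)"
    unfolding C0_def using assms(10) by (intro Lfun_grid_quantile_le[OF w n c _ K(1) K_bound]) auto
  also have "\<dots> \<le> beta\<^sup>2 + C0 + a\<^sup>2 - slope_energy w n / 8"
    using average_half_slope_terms_le[OF n, of "grid_slope w n" beta "lam * K"]
    unfolding c_def a_def slope_energy_def by simp
  also have "\<dots> < B" using energy by simp
  finally show "\<exists>Q\<in>Qset. set_integrable (wmeasure w) {0..1} Q \<and> Lfun M \<rho> X0 Q w beta lam < B"
    using grid_quantile_in_Qset[OF n c] set_integral_wmeasure_grid_quantile(1)[OF n c w] by blast
qed

end
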